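(* For every $n>0$, there are finite alphabets $\Sigma_I,\Sigma_O$ and a language $L_n\subseteq(\Sigma_I\times\Sigma_O)^\omega$ recognized by a finitary Büchi automaton with costs $\mathcal{A}_n$ with $n+2$ states such that an optimal winning strategy for Player $O$ in $\Gamma_{f_0}(L_n)$ has cost $n$, but an optimal winning strategy for Player $O$ in $\Gamma_{f_1}(L_n)$ has cost $1$.
   Context: A parity automaton with costs is a tuple $\mathcal{A}=(Q,\Sigma,q_I,\delta,\Omega,\mathrm{Cst})$ with a finite set $Q$ of states, a finite alphabet $\Sigma$, an initial state $q_I$, a deterministic complete transition function $\delta\colon Q\times\Sigma\to Q$, a coloring $\Omega\colon Q\to\mathbb{N}$, and a cost function $\mathrm{Cst}$ assigning to every transition $(q,a,\delta(q,a))$ either $\epsilon$ or $\mathtt{i}$ (increment-transition). A finitary Büchi automaton is one in which every transition is an increment-transition and $\Omega(Q)=\{1,2\}$. The run on $a_0a_1\cdots$ is $(q_0,a_0,q_1)(q_1,a_1,q_2)\cdots$ with $q_0=q_I$, $q_{j+1}=\delta(q_j,a_j)$; the cost of a finite run is its number of increment-transitions. For odd $c$, $\mathrm{Ans}(c)=\{c'\in\Omega(Q)\mid c'>c,\ c'\text{ even}\}$. For an infinite run $\rho$ and $n$, $\mathrm{Cor}(\rho,n)=0$ if $\Omega(q_n)$ is even, and otherwise it is the minimal cost of $(q_n,a_n,q_{n+1})\cdots(q_{n'-1},a_{n'-1},q_{n'})$ over $n'>n$ with $\Omega(q_{n'})\in\mathrm{Ans}(\Omega(q_n))$ ($\min\emptyset=\infty$).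 The run is accepting if $\limsup_n\mathrm{Cor}(\rho,n)<\infty$; $L(\mathcal{A})$ is the set of infinite words whose run is accepting. A delay function is a map $f\colon\mathbb{N}\to\mathbb{N}\setminus\{0\}$; for $k\ge0$, $f_k$ denotes the delay function with $f_k(0)=k+1$ and $f_k(i)=1$ for $i>0$. For $L\subseteq(\Sigma_I\times\Sigma_O)^\omega$, the delay game $\Gamma_f(L)$ is played in rounds $i=0,1,2,\ldots$: in round $i$, Player $I$ picks $u_i\in\Sigma_I^{f(i)}$, then Player $O$ picks $v_i\in\Sigma_O$. Player $O$ wins the play if the outcome, i.e., the word over $\Sigma_I\times\Sigma_O$ pairing $u_0u_1u_2\cdots$ and $v_0v_1v_2\cdots$ letterwise, is in $L$. A strategy for Player $O$ is a map $\tau_O\colon\Sigma_I^*\to\Sigma_O$; a play is consistent with $\tau_O$ if $v_i=\tau_O(u_0\cdots u_i)$ for all $i$; $\tau_O$ is winning if every consistent play is won by Player $O$. For a winning strategy $\tau_O$ in $\Gamma_f(L(\mathcal{A}))$, its cost is $\mathrm{Cst}_\mathcal{A}(\tau_O)=\sup_w\limsup_{n\to\infty}\mathrm{Cor}(\rho(w),n)$, where $w$ ranges over outcomes of plays consistent with $\tau_O$ and $\rho(w)$ is the run of $\mathcal{A}$ on $w$; a winning strategy is optimal if its cost is minimal among all winning strategies of Player $O$ in $\Gamma_f(L(\mathcal{A}))$. *)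

theory Defs
  imports Main "HOL-Library.Extended_Nat" "HOL-Library.Liminf_Limsup"
begin

text \<open>The cost function is represented as a predicate: cst q a = True iff the
  transition (q, a, delta q a) is an increment-transition; False means epsilon.\<close>
record ('q, 'a) pac =
  states :: "'q set"
  alph   :: "'a set"
  init   :: 'q
  trans  :: "'q \<Rightarrow> 'a \<Rightarrow> 'q"
  col    :: "'q \<Rightarrow> nat"
  cst    :: "'q \<Rightarrow> 'a \<Rightarrow> bool"

definition wf_pac :: "('q, 'a) pac \<Rightarrow> bool" where
  "wf_pac A \<longleftrightarrow> finite (states A) \<and> finite (alph A) \<and> init A \<in> states A \<and>
     (\<forall>q\<in>states A. \<forall>a\<in>alph A. trans A q a \<in> states A)"

definition finitary_buchi :: "('q, 'a) pac \<Rightarrow> bool" where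
  "finitary_buchi A \<longleftrightarrow> wf_pac A \<and> (\<forall>q\<in>states A. \<forall>a\<in>alph A. cst A q a) \<and>
     col A ` states A = {1, 2}"

primrec run :: "('q, 'a) pac \<Rightarrow> (nat \<Rightarrow> 'a) \<Rightarrow> nat \<Rightarrow> 'q" where
  "run A w 0 = init A"
| "run A w (Suc n) = trans A (run A w n) (w n)"

definition seg_cost :: "('q, 'a) pac \<Rightarrow> (nat \<Rightarrow> 'a) \<Rightarrow> nat \<Rightarrow> nat \<Rightarrow> nat" where
  "seg_cost A w n n' = card {j \<in> {n..<n'}. cst A (run A w j) (w j)}"

definition Ans :: "('q, 'a) pac \<Rightarrow> nat \<Rightarrow> nat set" where
  "Ans A c = {c' \<in> col A ` states A. c < c' \<and> even c'}"

definition Cor :: "('q, 'a) pac \<Rightarrow> (nat \<Rightarrow> 'a) \<Rightarrow> nat \<Rightarrow> enat" where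
  "Cor A w n = (if even (col A (run A w n)) then 0
     else (INF n' \<in> {n'. n < n' \<and> col A (run A w n') \<in> Ans A (col A (run A w n))}.
             enat (seg_cost A w n n')))"

definition accepting :: "('q, 'a) pac \<Rightarrow> (nat \<Rightarrow> 'a) \<Rightarrow> bool" where
  "accepting A w \<longleftrightarrow> limsup (Cor A w) < \<infinity>"

definition lang :: "('q, 'a) pac \<Rightarrow> (nat \<Rightarrow> 'a) set" where
  "lang A = {w. (\<forall>n. w n \<in> alph A) \<and> accepting A w}"

definition fk :: "nat \<Rightarrow> nat \<Rightarrow> nat" where
  "fk k i = (if i = 0 then k + 1 else 1)"

text \<open>Length of u_0 ... u_i.\<close>
definition pref_len :: "(nat \<Rightarrow> nat) \<Rightarrow> nat \<Rightarrow> nat" where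
  "pref_len f i = (\<Sum>j\<le>i. f j)"

text \<open>A play of Gamma_f consistent with tau is determined by the input word
  alpha = u_0 u_1 ...; its outcome pairs alpha n with v_n = tau(u_0...u_n).\<close>
definition outcome :: "(nat \<Rightarrow> nat) \<Rightarrow> ('i list \<Rightarrow> 'o) \<Rightarrow> (nat \<Rightarrow> 'i) \<Rightarrow> nat \<Rightarrow> 'i \<times> 'o" where
  "outcome f \<tau> \<alpha> = (\<lambda>n. (\<alpha> n, \<tau> (map \<alpha> [0..<pref_len f n])))"

definition strategy :: "'i set \<Rightarrow> 'o set \<Rightarrow> ('i list \<Rightarrow> 'o) \<Rightarrow> bool" where
  "strategy SI SO \<tau> \<longleftrightarrow> (\<forall>x\<in>lists SI. \<tau> x \<in> SO)"

definition winning :: "(nat \<Rightarrow> nat) \<Rightarrow> 'i set \<Rightarrow> 'o set \<Rightarrow> (nat \<Rightarrow> 'i \<times> 'o) set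
    \<Rightarrow> ('i list \<Rightarrow> 'o) \<Rightarrow> bool" where
  "winning f SI SO L \<tau> \<longleftrightarrow> strategy SI SO \<tau> \<and>
     (\<forall>\<alpha>. (\<forall>n. \<alpha> n \<in> SI) \<longrightarrow> outcome f \<tau> \<alpha> \<in> L)"

definition strat_cost :: "('q, 'i \<times> 'o) pac \<Rightarrow> (nat \<Rightarrow> nat) \<Rightarrow> 'i set
    \<Rightarrow> ('i list \<Rightarrow> 'o) \<Rightarrow> enat" where
  "strat_cost A f SI \<tau> = (SUP \<alpha> \<in> {\<alpha>. \<forall>n. \<alpha> n \<in> SI}. limsup (Cor A (outcome f \<tau> \<alpha>)))"

definition optimal :: "('q, 'i \<times> 'o) pac \<Rightarrow> (nat \<Rightarrow> nat) \<Rightarrow> 'i set \<Rightarrow> 'o set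
    \<Rightarrow> ('i list \<Rightarrow> 'o) \<Rightarrow> bool" where
  "optimal A f SI SO \<tau> \<longleftrightarrow> winning f SI SO (lang A) \<tau> \<and>
     (\<forall>\<tau>'. winning f SI SO (lang A) \<tau>' \<longrightarrow> strat_cost A f SI \<tau> \<le> strat_cost A f SI \<tau>')"

end

theory Submission
  imports Defs
begin

text \<open>In the initial state 0 (colour 2) Output announces a guess for the next input bit, and the
  automaton moves to the request state \<open>n\<close> or \<open>n + 1\<close> (colour 1) recording the guess. A correct
  guess is answered after one more step; a wrong guess leads into the chain \<open>n - 1, \<dots>, 1\<close> of
  request states counting down to the initial state. Hence every run answers each request within
  \<open>n\<close> steps, so every strategy wins with cost at most \<open>n\<close>, and since requests are issued
  infinitely often the cost is at least 1. Without lookahead Input can always contradict the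
  guess, forcing cost \<open>n\<close>; with one letter of lookahead Output copies the next input bit and
  achieves cost 1.\<close>

lemma seg_cost_all_increments:
  assumes "\<And>q a. cst A q a"
  shows "seg_cost A w m m' = m' - m"
proof -
  have "{j \<in> {m..<m'}. cst A (run A w j) (w j)} = {m..<m'}" using assms by blast
  then show ?thesis unfolding seg_cost_def by simp
qed

lemma le_limsup_if_frequently:
  fixes X :: "nat \<Rightarrow> 'a :: complete_lattice"
  assumes "\<And>N. \<exists>m\<ge>N. c \<le> X m"
  shows "c \<le> limsup X"
  unfolding limsup_INF_SUP
proof (rule INF_greatest)
  fix N
  obtain m where "m \<ge> N" "c \<le> X m" using assms by blast
  then show "c \<le> (SUP m\<in>{N..}. X m)" by (intro SUP_upper2[of m]) auto
qed

lemma pref_len_fk: "pref_len (fk k) m = m + k + 1"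
  unfolding pref_len_def fk_def by (induction m) auto

lemma outcome_in_alph:
  assumes "strategy SI SO \<tau>" "\<forall>m. \<alpha> m \<in> SI"
  shows "outcome f \<tau> \<alpha> m \<in> SI \<times> SO"
proof -
  have "map \<alpha> [0..<k] \<in> lists SI" for k using assms(2) by auto
  then show ?thesis using assms unfolding outcome_def strategy_def by auto
qed

definition guess_trans :: "nat \<Rightarrow> nat \<Rightarrow> nat \<times> nat \<Rightarrow> nat" where
  "guess_trans n q x = (if q = 0 then n + (if snd x = 0 then 0 else 1)
     else if n \<le> q then (if fst x = q - n then 0 else n - 1) else q - 1)"

definition guess_aut :: "nat \<Rightarrow> (nat, nat \<times> nat) pac" where
  "guess_aut n = \<lparr>states = {0..n+1}, alph = {0,1::nat} \<times> {0,1::nat}, init = 0,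
     trans = guess_trans n, col = (\<lambda>q. if q = 0 then 2 else 1), cst = (\<lambda>_ _. True)\<rparr>"

lemma guess_aut_simps [simp]:
  "states (guess_aut n) = {0..n+1}" "alph (guess_aut n) = {0,1} \<times> {0,1}"
  "init (guess_aut n) = 0" "trans (guess_aut n) = guess_trans n"
  "col (guess_aut n) = (\<lambda>q. if q = 0 then 2 else 1)" "cst (guess_aut n) = (\<lambda>_ _. True)"
  by (simp_all add: guess_aut_def)

lemma col_image_guess_aut: "col (guess_aut n) ` states (guess_aut n) = {1,2}"
proof
  show "col (guess_aut n) ` states (guess_aut n) \<subseteq> {1,2}" by auto
  have "2 \<in> col (guess_aut n) ` states (guess_aut n)" by (rule image_eqI[of _ _ 0]) auto
  moreover have "1 \<in> col (guess_aut n) ` states (guess_aut n)" by (rule image_eqI[of _ _ 1]) auto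
  ultimately show "{1,2} \<subseteq> col (guess_aut n) ` states (guess_aut n)" by auto
qed

lemma finitary_buchi_guess_aut: "finitary_buchi (guess_aut n)"
proof -
  have "guess_trans n q a \<in> {0..n+1}" if "q \<in> {0..n+1}" for q a
    using that unfolding guess_trans_def by auto
  then show ?thesis
    unfolding finitary_buchi_def wf_pac_def col_image_guess_aut by simp
qed

lemma Cor_guess_aut:
  "Cor (guess_aut n) w m = (if run (guess_aut n) w m = 0 then 0 else
     (INF m'\<in>{m'. m < m' \<and> run (guess_aut n) w m' = 0}. enat (m' - m)))"
proof -
  have "Ans (guess_aut n) 1 = {2}"
    unfolding Ans_def col_image_guess_aut by auto
  then show ?thesis
    unfolding Cor_def by (auto simp: seg_cost_all_increments intro!: arg_cong[where f = Inf])
qed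

lemma Cor_guess_aut_le:
  "run (guess_aut n) w (m + k) = 0 \<Longrightarrow> 0 < k \<Longrightarrow> Cor (guess_aut n) w m \<le> enat k"
  unfolding Cor_guess_aut by (auto intro!: INF_lower2[of "m + k"])

lemma Cor_guess_aut_ge:
  assumes "run (guess_aut n) w m \<noteq> 0"
    and "\<And>j. 0 < j \<Longrightarrow> j < k \<Longrightarrow> run (guess_aut n) w (m + j) \<noteq> 0"
  shows "enat k \<le> Cor (guess_aut n) w m"
  unfolding Cor_guess_aut if_not_P[OF assms(1)]
proof (rule INF_greatest, clarify)
  fix m' assume "m < m'" "run (guess_aut n) w m' = 0"
  with assms(2)[of "m' - m"] show "enat k \<le> enat (m' - m)" by force
qed

lemma run_guess_aut_countdown:
  assumes "run (guess_aut n) w m = q" "q < n" "j \<le> q"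
  shows "run (guess_aut n) w (m + j) = q - j"
  using assms(3)
proof (induction j)
  case (Suc j)
  then show ?case using assms(1,2) by (simp add: guess_trans_def)
qed (use assms(1) in simp)

lemma run_guess_aut_returns_to_init:
  assumes "n > 0" "run (guess_aut n) w m \<noteq> 0"
  obtains k where "0 < k" "k \<le> n" "run (guess_aut n) w (m + k) = 0"
proof (cases "run (guess_aut n) w m < n")
  case True
  then show ?thesis
    using that run_guess_aut_countdown[OF refl True order.refl] assms(2) by simp
next
  case False
  then have "run (guess_aut n) w (Suc m) = 0 \<or> run (guess_aut n) w (Suc m) = n - 1"
    using assms by (simp add: guess_trans_def)
  then show ?thesis
  proof
    assume "run (guess_aut n) w (Suc m) = 0"
    then show ?thesis using that[of 1] assms(1) by simp
  next
    assume "run (guess_aut n) w (Suc m) = n - 1"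
    from run_guess_aut_countdown[OF this, of "n - 1"]
    show ?thesis using that[of n] assms(1) by simp
  qed
qed

lemma Cor_guess_aut_le_n:
  assumes "n > 0"
  shows "Cor (guess_aut n) w m \<le> enat n"
proof (cases "run (guess_aut n) w m = 0")
  case True
  then show ?thesis by (simp add: Cor_guess_aut)
next
  case False
  then obtain k where "0 < k" "k \<le> n" "run (guess_aut n) w (m + k) = 0"
    using run_guess_aut_returns_to_init[OF assms] by blast
  then have "Cor (guess_aut n) w m \<le> enat k" by (intro Cor_guess_aut_le)
  with \<open>k \<le> n\<close> show ?thesis by (simp add: order_trans)
qed

lemma run_guess_aut_init_frequently:
  assumes "n > 0"
  shows "\<exists>m\<ge>N. run (guess_aut n) w m = 0"
proof (cases "run (guess_aut n) w N = 0")
  case False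
  then obtain k where "run (guess_aut n) w (N + k) = 0"
    using run_guess_aut_returns_to_init[OF assms] by blast
  then show ?thesis by (intro exI[of _ "N + k"]) simp
qed blast

lemma limsup_Cor_guess_aut_le_n:
  "n > 0 \<Longrightarrow> limsup (Cor (guess_aut n) w) \<le> enat n"
  by (rule Limsup_bounded) (simp add: Cor_guess_aut_le_n)

lemma one_le_limsup_Cor_guess_aut:
  assumes "n > 0"
  shows "1 \<le> limsup (Cor (guess_aut n) w)"
proof (rule le_limsup_if_frequently)
  fix N
  obtain m where m: "m \<ge> N" "run (guess_aut n) w m = 0"
    using run_guess_aut_init_frequently[OF assms] by blast
  then have "run (guess_aut n) w (Suc m) \<noteq> 0"
    using assms by (simp add: guess_trans_def)
  then have "enat 1 \<le> Cor (guess_aut n) w (Suc m)"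
    by (intro Cor_guess_aut_ge) auto
  then show "\<exists>m\<ge>N. 1 \<le> Cor (guess_aut n) w m"
    using m by (intro exI[of _ "Suc m"]) (auto simp: one_enat_def)
qed

lemma winning_guess_aut:
  assumes "n > 0" "strategy {0,1} {0,1} \<tau>"
  shows "winning f {0,1} {0,1} (lang (guess_aut n)) \<tau>"
proof -
  have "limsup (Cor (guess_aut n) w) < \<infinity>" for w
    using limsup_Cor_guess_aut_le_n[OF assms(1)] by (metis enat_ord_code(4) le_less_trans)
  then show ?thesis
    using outcome_in_alph[OF assms(2)] assms(2)
    unfolding winning_def lang_def accepting_def by auto
qed

lemma strat_cost_guess_aut_le_n:
  "n > 0 \<Longrightarrow> strat_cost (guess_aut n) f SI \<tau> \<le> enat n"
  unfolding strat_cost_def using limsup_Cor_guess_aut_le_n by (intro SUP_least) auto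

lemma one_le_strat_cost_guess_aut:
  assumes "n > 0" "SI \<noteq> {}"
  shows "1 \<le> strat_cost (guess_aut n) f SI \<tau>"
proof -
  obtain a where "a \<in> SI" using assms(2) by blast
  then show ?thesis
    unfolding strat_cost_def using one_le_limsup_Cor_guess_aut[OF assms(1)]
    by (intro SUP_upper2[of "\<lambda>_. a"]) auto
qed

definition copy_next :: "nat list \<Rightarrow> nat" where
  "copy_next xs = (if xs = [] then 0 else last xs)"

lemma strategy_copy_next: "strategy {0,1} {0,1} copy_next"
  unfolding strategy_def copy_next_def by auto

lemma outcome_copy_next: "outcome (fk 1) copy_next \<alpha> m = (\<alpha> m, \<alpha> (Suc m))"
  unfolding outcome_def pref_len_fk copy_next_def by simp

lemma run_copy_next_Suc:
  "run (guess_aut n) (outcome (fk 1) copy_next \<alpha>) (Suc m) =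
     guess_trans n (run (guess_aut n) (outcome (fk 1) copy_next \<alpha>) m) (\<alpha> m, \<alpha> (Suc m))"
  by (simp only: run.simps guess_aut_simps outcome_copy_next)

lemma run_copy_next:
  assumes "\<forall>m. \<alpha> m \<in> {0,1::nat}"
  shows "run (guess_aut n) (outcome (fk 1) copy_next \<alpha>) m \<in> {0, n + \<alpha> m}"
proof (induction m)
  case (Suc m)
  then show ?case
    using run_copy_next_Suc[of n \<alpha> m] assms[rule_format, of m] assms[rule_format, of "Suc m"]
    by (auto simp: guess_trans_def)
qed simp

lemma Cor_copy_next_le_1:
  assumes "\<forall>m. \<alpha> m \<in> {0,1::nat}"
  shows "Cor (guess_aut n) (outcome (fk 1) copy_next \<alpha>) m \<le> 1"
proof (cases "run (guess_aut n) (outcome (fk 1) copy_next \<alpha>) m = 0")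
  case True
  then show ?thesis by (simp add: Cor_guess_aut)
next
  case False
  then have "run (guess_aut n) (outcome (fk 1) copy_next \<alpha>) m = n + \<alpha> m"
    using run_copy_next[OF assms, of n m] by simp
  then have "run (guess_aut n) (outcome (fk 1) copy_next \<alpha>) (m + 1) = 0"
    using False run_copy_next_Suc[of n \<alpha> m] by (simp add: guess_trans_def)
  from Cor_guess_aut_le[OF this] show ?thesis by (simp add: one_enat_def)
qed

lemma strat_cost_copy_next:
  assumes "n > 0"
  shows "strat_cost (guess_aut n) (fk 1) {0,1} copy_next = 1"
proof (rule antisym)
  have "limsup (Cor (guess_aut n) (outcome (fk 1) copy_next \<alpha>)) \<le> 1"
    if "\<forall>m. \<alpha> m \<in> {0,1::nat}" for \<alpha>
    using Cor_copy_next_le_1[OF that] by (intro Limsup_bounded always_eventually) blast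
  then show "strat_cost (guess_aut n) (fk 1) {0,1} copy_next \<le> 1"
    unfolding strat_cost_def by (intro SUP_least) blast
qed (rule one_le_strat_cost_guess_aut[OF assms], simp)

primrec spoiler_prefix :: "(nat list \<Rightarrow> nat) \<Rightarrow> nat \<Rightarrow> nat list" where
  "spoiler_prefix \<tau> 0 = [0]"
| "spoiler_prefix \<tau> (Suc m) =
     spoiler_prefix \<tau> m @ [if \<tau> (spoiler_prefix \<tau> m) = 0 then 1 else 0]"

definition spoiler :: "(nat list \<Rightarrow> nat) \<Rightarrow> nat \<Rightarrow> nat" where
  "spoiler \<tau> m = last (spoiler_prefix \<tau> m)"

lemma spoiler_Suc: "spoiler \<tau> (Suc m) = (if \<tau> (spoiler_prefix \<tau> m) = 0 then 1 else 0)"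
  unfolding spoiler_def by simp

lemma spoiler_in_bits: "spoiler \<tau> m \<in> {0,1}"
  by (cases m) (simp_all add: spoiler_Suc, simp add: spoiler_def)

lemma map_spoiler: "map (spoiler \<tau>) [0..<Suc m] = spoiler_prefix \<tau> m"
  by (induction m) (simp_all add: spoiler_def)

lemma outcome_spoiler:
  "outcome (fk 0) \<tau> (spoiler \<tau>) m = (spoiler \<tau> m, \<tau> (spoiler_prefix \<tau> m))"
  unfolding outcome_def pref_len_fk by (simp add: map_spoiler del: upt_Suc)

lemma Cor_spoiler_ge_n:
  assumes "n > 0" "run (guess_aut n) (outcome (fk 0) \<tau> (spoiler \<tau>)) m = 0"
  shows "enat n \<le> Cor (guess_aut n) (outcome (fk 0) \<tau> (spoiler \<tau>)) (Suc m)"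
proof (rule Cor_guess_aut_ge)
  let ?r = "run (guess_aut n) (outcome (fk 0) \<tau> (spoiler \<tau>))"
  have guess: "?r (Suc m) = n + (if \<tau> (spoiler_prefix \<tau> m) = 0 then 0 else 1)"
    using assms(2) by (simp add: outcome_spoiler guess_trans_def)
  then show "?r (Suc m) \<noteq> 0" using assms(1) by simp
  have wrong: "?r (Suc (Suc m)) = n - 1"
    using guess assms(1) by (simp add: outcome_spoiler guess_trans_def spoiler_Suc)
  fix j assume "0 < j" "j < n"
  then show "?r (Suc m + j) \<noteq> 0"
    using run_guess_aut_countdown[OF wrong, of "j - 1"] by simp
qed

lemma n_le_strat_cost_guess_aut_fk0:
  assumes "n > 0"
  shows "enat n \<le> strat_cost (guess_aut n) (fk 0) {0,1} \<tau>"
proof -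
  have "enat n \<le> limsup (Cor (guess_aut n) (outcome (fk 0) \<tau> (spoiler \<tau>)))"
  proof (rule le_limsup_if_frequently)
    fix N
    obtain m where "m \<ge> N" "run (guess_aut n) (outcome (fk 0) \<tau> (spoiler \<tau>)) m = 0"
      using run_guess_aut_init_frequently[OF assms] by blast
    then show "\<exists>m\<ge>N. enat n \<le> Cor (guess_aut n) (outcome (fk 0) \<tau> (spoiler \<tau>)) m"
      using Cor_spoiler_ge_n[OF assms] by (intro exI[of _ "Suc m"]) auto
  qed
  then show ?thesis
    unfolding strat_cost_def using spoiler_in_bits by (intro SUP_upper2[of "spoiler \<tau>"]) auto
qed

theorem theorem5:
  fixes n :: nat
  assumes "n > 0"
  shows "\<exists>(SI :: nat set) (SO :: nat set) (A :: (nat, nat \<times> nat) pac).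
    finite SI \<and> finite SO \<and> finitary_buchi A \<and> alph A = SI \<times> SO \<and>
    card (states A) = n + 2 \<and>
    (\<exists>\<tau>. optimal A (fk 0) SI SO \<tau> \<and> strat_cost A (fk 0) SI \<tau> = enat n) \<and>
    (\<exists>\<tau>. optimal A (fk 1) SI SO \<tau> \<and> strat_cost A (fk 1) SI \<tau> = 1)"
proof (intro exI conjI)
  let ?A = "guess_aut n" and ?zero = "\<lambda>_ :: nat list. 0 :: nat"
  have zero_strategy: "strategy {0,1} {0,1} ?zero"
    unfolding strategy_def by simp
  show cost0: "strat_cost ?A (fk 0) {0,1} ?zero = enat n"
    using strat_cost_guess_aut_le_n[OF assms] n_le_strat_cost_guess_aut_fk0[OF assms] by (rule antisym)
  show "optimal ?A (fk 0) {0,1} {0,1} ?zero"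
    unfolding optimal_def
    using winning_guess_aut[OF assms zero_strategy] cost0 n_le_strat_cost_guess_aut_fk0[OF assms] by simp
  show cost1: "strat_cost ?A (fk 1) {0,1} copy_next = 1"
    by (rule strat_cost_copy_next[OF assms])
  show "optimal ?A (fk 1) {0,1} {0,1} copy_next"
    unfolding optimal_def using winning_guess_aut[OF assms strategy_copy_next] cost1
      one_le_strat_cost_guess_aut[OF assms] by simp
qed (simp_all add: finitary_buchi_guess_aut)

end
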